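(* Let $\{X_\gamma\}_{\gamma\in\Gamma}$ be a family of nonzero strictly convex real Banach spaces and let $Z$ denote either $Z_0=\bigoplus^{c_0}_{\gamma\in\Gamma}X_\gamma$ or $Z_\infty=\bigoplus^{\ell_\infty}_{\gamma\in\Gamma}X_\gamma$. Let $\gamma_0\in\Gamma$ and $x_{\gamma_0}\in S_{X_{\gamma_0}}$. Then $A(\gamma_0,x_{\gamma_0})=\{z\in S_Z: z(\gamma_0)=x_{\gamma_0}\}$ is a maximal norm-closed proper face of $B_Z$, equivalently, a maximal convex subset of $S_Z$.
   Context: All Banach spaces are real. $Z_\infty$ is the space of families $z=(z(\gamma))_{\gamma\in\Gamma}$, $z(\gamma)\in X_\gamma$, with $\|z\|=\sup_\gamma\|z(\gamma)\|<\infty$; $Z_0$ is its closed subspace of families with $\{\gamma:\|z(\gamma)\|>\varepsilon\}$ finite for all $\varepsilon>0$. A Banach space is strictly convex if every point of its unit sphere is an extreme point of its closed unit ball. *)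

theory Defs
  imports "HOL-Analysis.Analysis" "HOL-Library.Function_Algebras"
begin

text \<open>Pointwise real vector space structure on families z :: 'g => 'b,
  so that the library notions convex, open_segment, face_of apply to
  subsets of the product space.\<close>

instantiation "fun" :: (type, real_vector) real_vector
begin
definition scaleR_fun :: "real \<Rightarrow> ('a \<Rightarrow> 'b) \<Rightarrow> 'a \<Rightarrow> 'b"
  where "scaleR_fun r f = (\<lambda>x. r *\<^sub>R f x)"
instance
  by standard (simp_all add: scaleR_fun_def fun_eq_iff scaleR_add_right scaleR_add_left)
end

definition supn :: "('g \<Rightarrow> 'b::real_normed_vector) \<Rightarrow> real"
  where "supn z = (SUP g. norm (z g))"

text \<open>The l_infinity-sum Z_infinity and the c_0-sum Z_0 of the spaces X g
  (each X g a closed linear subspace of the ambient Banach space 'b).\<close>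
definition Zinf :: "('g \<Rightarrow> 'b::real_normed_vector set) \<Rightarrow> ('g \<Rightarrow> 'b) set"
  where "Zinf X = {z. (\<forall>g. z g \<in> X g) \<and> bdd_above (range (\<lambda>g. norm (z g)))}"

definition Z0 :: "('g \<Rightarrow> 'b::real_normed_vector set) \<Rightarrow> ('g \<Rightarrow> 'b) set"
  where "Z0 X = {z. (\<forall>g. z g \<in> X g) \<and> (\<forall>e>0. finite {g. norm (z g) > e})}"

definition unit_ball_Z :: "('g \<Rightarrow> 'b::real_normed_vector) set \<Rightarrow> ('g \<Rightarrow> 'b) set"
  where "unit_ball_Z Z = {z \<in> Z. supn z \<le> 1}"

definition unit_sphere_Z :: "('g \<Rightarrow> 'b::real_normed_vector) set \<Rightarrow> ('g \<Rightarrow> 'b) set"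
  where "unit_sphere_Z Z = {z \<in> Z. supn z = 1}"

definition norm_closed_in :: "('g \<Rightarrow> 'b::real_normed_vector) set \<Rightarrow> ('g \<Rightarrow> 'b) set \<Rightarrow> bool"
  where "norm_closed_in Z F \<longleftrightarrow> F \<subseteq> Z \<and>
     (\<forall>s z. (\<forall>n. s n \<in> F) \<longrightarrow> z \<in> Z \<longrightarrow> (\<lambda>n. supn (s n - z)) \<longlonglongrightarrow> 0 \<longrightarrow> z \<in> F)"

definition strictly_convex_sub :: "'b::real_normed_vector set \<Rightarrow> bool"
  where "strictly_convex_sub X \<longleftrightarrow>
     (\<forall>x\<in>X. norm x = 1 \<longrightarrow> x extreme_point_of {y \<in> X. norm y \<le> 1})"

definition max_closed_proper_face :: "('g \<Rightarrow> 'b::real_normed_vector) set \<Rightarrow> ('g \<Rightarrow> 'b) set \<Rightarrow> ('g \<Rightarrow> 'b) set \<Rightarrow> bool"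
  where "max_closed_proper_face Z B F \<longleftrightarrow>
     F face_of B \<and> norm_closed_in Z F \<and> F \<noteq> {} \<and> F \<noteq> B \<and>
     (\<forall>G. G face_of B \<and> norm_closed_in Z G \<and> G \<noteq> {} \<and> G \<noteq> B \<and> F \<subseteq> G \<longrightarrow> G = F)"

definition max_convex_subset :: "('a::real_vector) set \<Rightarrow> 'a set \<Rightarrow> bool"
  where "max_convex_subset S F \<longleftrightarrow> convex F \<and> F \<subseteq> S \<and>
     (\<forall>C. convex C \<and> C \<subseteq> S \<and> F \<subseteq> C \<longrightarrow> C = F)"

end

theory Submission
  imports Defs
begin

text \<open>The slice is the preimage of the extreme point x0 of the unit ball of X g0 under evaluation
  at g0, hence a face of the unit ball of Z, and it is closed because evaluation is
  1-Lipschitz for the sup norm. For maximality take w in the ball with w g0 \<noteq> x0 and let z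
  be -w with its g0-coordinate replaced by x0. Then z lies in the slice, and the midpoint of
  z and w vanishes off g0 while at g0 it is the midpoint of x0 and w g0, of norm < 1 by strict
  convexity. So any convex set containing the slice and w contains a point of sup norm < 1:
  it cannot lie in the unit sphere, and a face of the ball containing such an internal point
  is the whole ball.\<close>

lemma scaleR_fun_apply [simp]: "(c *\<^sub>R f) x = c *\<^sub>R f x"
  by (simp add: scaleR_fun_def)

lemma midpoint_fun_apply [simp]: "midpoint z w g = midpoint (z g) (w g)"
  by (simp add: midpoint_def)

lemma norm_le_supn: "z \<in> Zinf X \<Longrightarrow> norm (z g) \<le> supn z"
  unfolding supn_def Zinf_def by (auto intro: cSUP_upper)

lemma supn_le: "(\<And>g. norm (z g) \<le> c) \<Longrightarrow> supn z \<le> c"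
  unfolding supn_def by (rule cSUP_least) auto

lemma Z0_subset_Zinf: "Z0 X \<subseteq> Zinf X"
proof
  fix z assume z: "z \<in> Z0 X"
  let ?F = "{g. norm (z g) > 1}"
  have "finite ?F" using z by (auto simp: Z0_def)
  then have "bdd_above ((\<lambda>g. norm (z g)) ` ?F \<union> {..1})" by simp
  then have "bdd_above (range (\<lambda>g. norm (z g)))" by (rule bdd_above_mono) force
  then show "z \<in> Zinf X" using z by (simp add: Zinf_def Z0_def)
qed

lemma subspace_Zinf:
  assumes "\<And>g. subspace (X g)"
  shows "subspace (Zinf X)"
  unfolding subspace_def
proof (intro conjI ballI allI)
  show "0 \<in> Zinf X" using assms by (simp add: Zinf_def subspace_0)
next
  fix z w assume "z \<in> Zinf X" "w \<in> Zinf X"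
  then obtain M N where "\<And>g. norm (z g) \<le> M" "\<And>g. norm (w g) \<le> N" "\<And>g. z g \<in> X g" "\<And>g. w g \<in> X g"
    by (auto simp: Zinf_def bdd_above_def)
  then show "z + w \<in> Zinf X" using assms
    by (auto simp: Zinf_def subspace_add intro!: bdd_aboveI2[where M = "M + N"] norm_triangle_le add_mono)
next
  fix c :: real and z assume "z \<in> Zinf X"
  then obtain M where "\<And>g. norm (z g) \<le> M" "\<And>g. z g \<in> X g"
    by (auto simp: Zinf_def bdd_above_def)
  then show "c *\<^sub>R z \<in> Zinf X" using assms
    by (auto simp: Zinf_def subspace_scale intro!: bdd_aboveI2[where M = "\<bar>c\<bar> * M"] mult_left_mono)
qed

lemma subspace_Z0:
  assumes "\<And>g. subspace (X g)"
  shows "subspace (Z0 X)"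
  unfolding subspace_def
proof (intro conjI ballI allI)
  show "0 \<in> Z0 X" using assms by (simp add: Z0_def subspace_0)
next
  fix z w assume z: "z \<in> Z0 X" and w: "w \<in> Z0 X"
  have "finite {g. norm ((z + w) g) > e}" if "e > 0" for e
  proof (rule finite_subset)
    show "{g. norm ((z + w) g) > e} \<subseteq> {g. norm (z g) > e / 2} \<union> {g. norm (w g) > e / 2}"
    proof
      fix g assume "g \<in> {g. norm ((z + w) g) > e}"
      then show "g \<in> {g. norm (z g) > e / 2} \<union> {g. norm (w g) > e / 2}"
        using norm_triangle_ineq[of "z g" "w g"] by auto
    qed
    show "finite ({g. norm (z g) > e / 2} \<union> {g. norm (w g) > e / 2})"
      using z w \<open>e > 0\<close> unfolding finite_Un Z0_def mem_Collect_eq by (meson half_gt_zero)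
  qed
  then show "z + w \<in> Z0 X" using z w assms by (simp add: Z0_def subspace_add)
next
  fix c :: real and z assume z: "z \<in> Z0 X"
  have "finite {g. norm ((c *\<^sub>R z) g) > e}" if "e > 0" for e
  proof (cases "c = 0")
    case False
    have "{g. norm ((c *\<^sub>R z) g) > e} = {g. norm (z g) > e / \<bar>c\<bar>}"
      using False by (auto simp: field_simps)
    then show ?thesis using z that False by (simp add: Z0_def)
  qed (use that in simp)
  then show "c *\<^sub>R z \<in> Z0 X" using z assms by (simp add: Z0_def subspace_scale)
qed

lemma fun_upd_in_Zinf: "z \<in> Zinf X \<Longrightarrow> v \<in> X g \<Longrightarrow> z(g := v) \<in> Zinf X"
  unfolding Zinf_def
  by (auto simp: bdd_above_def) (metis max.cobounded1 max.cobounded2 order_trans)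

lemma fun_upd_in_Z0:
  assumes z: "z \<in> Z0 X" and v: "v \<in> X g"
  shows "z(g := v) \<in> Z0 X"
proof -
  have "finite {g'. norm ((z(g := v)) g') > e}" if "e > 0" for e
  proof (rule finite_subset)
    show "{g'. norm ((z(g := v)) g') > e} \<subseteq> insert g {g'. norm (z g') > e}" by auto
    show "finite (insert g {g'. norm (z g') > e})" using z that by (simp add: Z0_def)
  qed
  then show ?thesis using z v by (simp add: Z0_def)
qed

lemma face_of_eq_if_internal_point:
  assumes G: "G face_of S" "m \<in> G"
    and internal: "\<And>b. b \<in> S \<Longrightarrow> b \<noteq> m \<Longrightarrow> \<exists>c\<in>S. m \<in> open_segment c b"
  shows "G = S"
proof
  show "G \<subseteq> S" using G(1) by (rule face_of_imp_subset)
  show "S \<subseteq> G"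
  proof
    fix b assume "b \<in> S"
    then show "b \<in> G"
      using G internal[of b] face_ofD[OF G(1) _ _ _ G(2)] by (cases "b = m") auto
  qed
qed

lemma face_of_preimage_extreme_point:
  assumes "linear f" "convex S" "f ` S \<subseteq> K" "x extreme_point_of K"
  shows "{z \<in> S. f z = x} face_of S"
  unfolding face_of_def
proof (intro conjI ballI impI)
  show "{z \<in> S. f z = x} \<subseteq> S" by blast
  show "convex {z \<in> S. f z = x}"
    using convex_linear_vimage[OF \<open>linear f\<close> convex_singleton[of x]] \<open>convex S\<close>
    by (simp add: Collect_conj_eq vimage_def convex_Int Int_commute)
  fix a b z assume ab: "a \<in> S" "b \<in> S" and z: "z \<in> {z \<in> S. f z = x}" "z \<in> open_segment a b"
  then obtain u where u: "0 < u" "u < 1" and zu: "z = (1 - u) *\<^sub>R a + u *\<^sub>R b"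
    unfolding in_segment by blast
  have fz: "x = (1 - u) *\<^sub>R f a + u *\<^sub>R f b"
    using z zu linear_add[OF \<open>linear f\<close>] linear_scale[OF \<open>linear f\<close>] by simp
  have "f a = f b"
  proof (rule ccontr)
    assume "f a \<noteq> f b"
    then have "x \<in> open_segment (f a) (f b)" using u fz unfolding in_segment by blast
    then show False using assms(3,4) ab by (auto simp: extreme_point_of_def)
  qed
  then have "f a = x" using fz by (simp flip: scaleR_add_left)
  then show "a \<in> {z \<in> S. f z = x}" "b \<in> {z \<in> S. f z = x}" using ab \<open>f a = f b\<close> by auto
qed

lemma strictly_convex_sub_norm_midpoint_less:
  assumes "strictly_convex_sub X" "subspace X"
    and "x \<in> X" "norm x = 1" "y \<in> X" "norm y \<le> 1" "y \<noteq> x"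
  shows "norm (midpoint x y) < 1"
proof -
  have in_X: "midpoint x y \<in> X"
    using assms(2,3,5) by (simp add: midpoint_def subspace_add subspace_scale)
  have le: "norm (midpoint x y) \<le> 1"
    using norm_triangle_ineq[of x y] assms(4,6) by (simp add: midpoint_def)
  have "x \<in> {v \<in> X. norm v \<le> 1}" "y \<in> {v \<in> X. norm v \<le> 1}" using assms(3-6) by auto
  moreover have "midpoint x y \<in> open_segment x y" using assms(7) by simp
  ultimately have "\<not> midpoint x y extreme_point_of {v \<in> X. norm v \<le> 1}"
    unfolding extreme_point_of_def by blast
  then show ?thesis
    using assms(1) in_X le unfolding strictly_convex_sub_def by force
qed

locale sup_sum_subspace =
  fixes X :: "'g \<Rightarrow> 'b::real_normed_vector set" and Z :: "('g \<Rightarrow> 'b) set"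
  assumes subspace_Z: "subspace Z"
    and Z_subset_Zinf: "Z \<subseteq> Zinf X"
    and fun_upd_in_Z: "z \<in> Z \<Longrightarrow> v \<in> X g \<Longrightarrow> z(g := v) \<in> Z"
begin

lemma in_X: "z \<in> Z \<Longrightarrow> z g \<in> X g"
  using Z_subset_Zinf unfolding Zinf_def by blast

lemma norm_le_supn_Z: "z \<in> Z \<Longrightarrow> norm (z g) \<le> supn z"
  using Z_subset_Zinf by (intro norm_le_supn) blast

lemma mem_unit_ball_Z: "z \<in> unit_ball_Z Z \<longleftrightarrow> z \<in> Z \<and> (\<forall>g. norm (z g) \<le> 1)"
proof
  assume "z \<in> unit_ball_Z Z"
  then have "z \<in> Z" "supn z \<le> 1" by (simp_all add: unit_ball_Z_def)
  then show "z \<in> Z \<and> (\<forall>g. norm (z g) \<le> 1)" by (simp add: order_trans[OF norm_le_supn_Z])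
qed (simp add: unit_ball_Z_def supn_le)

lemma convex_unit_ball_Z: "convex (unit_ball_Z Z)"
  unfolding convex_def
proof (intro ballI allI impI)
  fix z w and u v :: real
  assume zw: "z \<in> unit_ball_Z Z" "w \<in> unit_ball_Z Z" and uv: "0 \<le> u" "0 \<le> v" "u + v = 1"
  have "norm (u *\<^sub>R z g + v *\<^sub>R w g) \<le> 1" for g
  proof -
    have "norm (u *\<^sub>R z g + v *\<^sub>R w g) \<le> u * norm (z g) + v * norm (w g)"
      using norm_triangle_ineq[of "u *\<^sub>R z g" "v *\<^sub>R w g"] uv by simp
    also have "\<dots> \<le> u * 1 + v * 1"
      using zw uv by (intro add_mono mult_left_mono) (auto simp: mem_unit_ball_Z)
    finally show ?thesis using uv by simp
  qed
  moreover have "u *\<^sub>R z + v *\<^sub>R w \<in> Z"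
    using zw subspace_Z by (simp add: mem_unit_ball_Z subspace_add subspace_scale)
  ultimately show "u *\<^sub>R z + v *\<^sub>R w \<in> unit_ball_Z Z" by (simp add: mem_unit_ball_Z)
qed

lemma unit_ball_Z_internal_point:
  assumes m: "m \<in> Z" "supn m < 1" and b: "b \<in> unit_ball_Z Z" "b \<noteq> m"
  shows "\<exists>c\<in>unit_ball_Z Z. m \<in> open_segment c b"
proof -
  define u where "u = (1 - supn m) / 2"
  define c where "c = inverse (1 - u) *\<^sub>R (m - u *\<^sub>R b)"
  have "0 \<le> supn m" using norm_le_supn_Z[OF m(1), of undefined] by (meson norm_ge_zero order_trans)
  then have u: "0 < u" "u < 1" "supn m + u = 1 - u" using m(2) by (auto simp: u_def field_simps)
  have "(1 - u) *\<^sub>R c = m - u *\<^sub>R b" using u(2) by (simp add: c_def)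
  then have m_eq: "m = (1 - u) *\<^sub>R c + u *\<^sub>R b" by (simp add: algebra_simps)
  have "norm (c g) \<le> 1" for g
  proof -
    have "norm (m g - u *\<^sub>R b g) \<le> norm (m g) + u * norm (b g)"
      using norm_triangle_ineq4[of "m g" "u *\<^sub>R b g"] u by simp
    also have "\<dots> \<le> supn m + u * 1"
      using norm_le_supn_Z[OF m(1)] b(1) u by (intro add_mono mult_left_mono) (auto simp: mem_unit_ball_Z)
    finally have "norm (m g - u *\<^sub>R b g) \<le> 1 - u" using u(3) by simp
    moreover have "norm (c g) = norm (m g - u *\<^sub>R b g) / (1 - u)"
      using u(2) by (simp add: c_def divide_inverse_commute)
    ultimately show ?thesis using u(2) by simp
  qed
  moreover have "c \<in> Z" using m(1) b(1) subspace_Z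
    by (simp add: c_def mem_unit_ball_Z subspace_diff subspace_scale)
  ultimately have "c \<in> unit_ball_Z Z" by (simp add: mem_unit_ball_Z)
  moreover have "c \<noteq> b"
  proof
    assume "c = b"
    then have "m = b" using m_eq by (simp flip: scaleR_add_left)
    then show False using b(2) by simp
  qed
  ultimately show ?thesis using u m_eq unfolding in_segment by blast
qed

lemma norm_closed_in_Z_coordinatewise:
  assumes "\<And>g. closed (C g)"
  shows "norm_closed_in Z {z \<in> Z. \<forall>g. z g \<in> C g}"
  unfolding norm_closed_in_def
proof (intro conjI allI impI)
  fix s z assume s: "\<forall>n. s n \<in> {z \<in> Z. \<forall>g. z g \<in> C g}" and z: "z \<in> Z"
    and lim: "(\<lambda>n. supn (s n - z)) \<longlonglongrightarrow> 0"
  have coordinate_lim: "(\<lambda>n. s n g) \<longlonglongrightarrow> z g" for g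
  proof -
    have "s n - z \<in> Z" for n using s z subspace_Z by (simp add: subspace_diff)
    then have "norm (s n g - z g) \<le> supn (s n - z)" for n
      using norm_le_supn_Z[of "s n - z" g] by simp
    then have "(\<lambda>n. s n g - z g) \<longlonglongrightarrow> 0"
      by (intro Lim_null_comparison[OF always_eventually lim]) blast
    then show ?thesis by (rule LIM_zero_cancel)
  qed
  have "z g \<in> C g" for g
    using closed_sequentially[OF assms _ coordinate_lim] s by blast
  then show "z \<in> {z \<in> Z. \<forall>g. z g \<in> C g}" using z by blast
qed auto

context
  fixes g0 :: 'g and x0 :: 'b
  assumes subspace_X0: "subspace (X g0)" and strictly_convex_X0: "strictly_convex_sub (X g0)"
    and x0: "x0 \<in> X g0" "norm x0 = 1"
begin

lemma slice_sphere_eq_slice_ball: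
  "{z \<in> unit_sphere_Z Z. z g0 = x0} = {z \<in> unit_ball_Z Z. z g0 = x0}"
proof -
  have "supn z = 1" if "z \<in> unit_ball_Z Z" "z g0 = x0" for z
    using that norm_le_supn_Z[of z g0] x0(2) by (simp add: unit_ball_Z_def)
  then show ?thesis by (auto simp: unit_sphere_Z_def unit_ball_Z_def)
qed

lemma slice_face_of_unit_ball: "{z \<in> unit_ball_Z Z. z g0 = x0} face_of unit_ball_Z Z"
proof (rule face_of_preimage_extreme_point)
  show "linear (\<lambda>z. z g0)" by (simp add: linear_iff)
  show "convex (unit_ball_Z Z)" by (rule convex_unit_ball_Z)
  show "(\<lambda>z. z g0) ` unit_ball_Z Z \<subseteq> {y \<in> X g0. norm y \<le> 1}"
    by (auto simp: mem_unit_ball_Z in_X)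
  show "x0 extreme_point_of {y \<in> X g0. norm y \<le> 1}"
    using strictly_convex_X0 x0 by (simp add: strictly_convex_sub_def)
qed

lemma norm_closed_in_slice: "norm_closed_in Z {z \<in> unit_ball_Z Z. z g0 = x0}"
proof -
  let ?C = "\<lambda>g. if g = g0 then {x0} else cball 0 1"
  have "(\<forall>g. y g \<in> ?C g) \<longleftrightarrow> (\<forall>g. norm (y g) \<le> 1) \<and> y g0 = x0" for y :: "'g \<Rightarrow> 'b"
  proof (intro iffI conjI allI)
    fix g assume "\<forall>g. y g \<in> ?C g"
    then have "y g \<in> ?C g" ..
    then show "norm (y g) \<le> 1" using x0(2) by (auto split: if_splits)
  next
    assume "\<forall>g. y g \<in> ?C g"
    then have "y g0 \<in> ?C g0" ..
    then show "y g0 = x0" by simp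
  qed (use x0(2) in simp)
  then have "{z \<in> unit_ball_Z Z. z g0 = x0} = {z \<in> Z. \<forall>g. z g \<in> ?C g}"
    by (simp add: mem_unit_ball_Z conj_assoc)
  moreover have "norm_closed_in Z {z \<in> Z. \<forall>g. z g \<in> ?C g}"
    by (rule norm_closed_in_Z_coordinatewise) simp
  ultimately show ?thesis by simp
qed

lemma fun_upd_zero_in_slice: "0(g0 := x0) \<in> {z \<in> unit_ball_Z Z. z g0 = x0}"
  using fun_upd_in_Z[OF subspace_0[OF subspace_Z] x0(1)] x0(2) by (simp add: mem_unit_ball_Z)

lemma zero_in_unit_ball_not_in_slice:
  "0 \<in> unit_ball_Z Z" "0 \<notin> {z \<in> unit_ball_Z Z. z g0 = x0}"
  using subspace_0[OF subspace_Z] x0(2) by (auto simp: mem_unit_ball_Z)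

lemma exists_slice_midpoint_supn_less:
  assumes w: "w \<in> unit_ball_Z Z" "w g0 \<noteq> x0"
  shows "\<exists>z \<in> {z \<in> unit_ball_Z Z. z g0 = x0}. supn (midpoint z w) < 1"
proof
  let ?z = "(- w)(g0 := x0)"
  show "?z \<in> {z \<in> unit_ball_Z Z. z g0 = x0}"
    using fun_upd_in_Z[OF subspace_neg[OF subspace_Z] x0(1)] w(1) x0(2)
    by (auto simp: mem_unit_ball_Z)
  have "norm (midpoint x0 (w g0)) < 1"
    using strictly_convex_sub_norm_midpoint_less[OF strictly_convex_X0 subspace_X0 x0] w
    by (simp add: mem_unit_ball_Z in_X)
  moreover have "supn (midpoint ?z w) \<le> norm (midpoint x0 (w g0))"
    by (rule supn_le) (simp add: midpoint_def)
  ultimately show "supn (midpoint ?z w) < 1" by linarith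
qed

lemma slice_maximal_face:
  assumes G: "G face_of unit_ball_Z Z" "G \<noteq> unit_ball_Z Z"
    and slice: "{z \<in> unit_ball_Z Z. z g0 = x0} \<subseteq> G"
  shows "G = {z \<in> unit_ball_Z Z. z g0 = x0}"
proof (rule ccontr)
  assume "G \<noteq> {z \<in> unit_ball_Z Z. z g0 = x0}"
  then obtain w where w: "w \<in> G" "w g0 \<noteq> x0" using slice face_of_imp_subset[OF G(1)] by blast
  then have "w \<in> unit_ball_Z Z" using face_of_imp_subset[OF G(1)] by blast
  then obtain z where z: "z \<in> G" "supn (midpoint z w) < 1"
    using exists_slice_midpoint_supn_less w(2) slice by blast
  have "midpoint z w \<in> G"
    using face_of_imp_convex[OF G(1)] z(1) w(1) midpoint_in_closed_segment
    by (blast dest: convex_contains_segment[THEN iffD1])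
  moreover have "midpoint z w \<in> Z"
    using calculation face_of_imp_subset[OF G(1)] by (auto simp: mem_unit_ball_Z)
  ultimately have "G = unit_ball_Z Z"
    using G(1) z(2) unit_ball_Z_internal_point by (intro face_of_eq_if_internal_point) blast+
  then show False using G(2) by blast
qed

lemma slice_maximal_convex:
  assumes C: "convex C" "C \<subseteq> unit_sphere_Z Z"
    and slice: "{z \<in> unit_sphere_Z Z. z g0 = x0} \<subseteq> C"
  shows "C = {z \<in> unit_sphere_Z Z. z g0 = x0}"
proof (rule ccontr)
  have sphere_ball: "unit_sphere_Z Z \<subseteq> unit_ball_Z Z" by (auto simp: unit_sphere_Z_def unit_ball_Z_def)
  assume "C \<noteq> {z \<in> unit_sphere_Z Z. z g0 = x0}"
  then obtain w where w: "w \<in> C" "w g0 \<noteq> x0" using slice C(2) by blast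
  then obtain z where z: "z \<in> C" "supn (midpoint z w) < 1"
    using exists_slice_midpoint_supn_less C(2) sphere_ball slice slice_sphere_eq_slice_ball by blast
  have "midpoint z w \<in> C"
    using C(1) z(1) w(1) midpoint_in_closed_segment
    by (blast dest: convex_contains_segment[THEN iffD1])
  then show False using C(2) z(2) by (auto simp: unit_sphere_Z_def)
qed

lemma max_closed_proper_face_slice:
  "max_closed_proper_face Z (unit_ball_Z Z) {z \<in> unit_sphere_Z Z. z g0 = x0}"
  unfolding max_closed_proper_face_def slice_sphere_eq_slice_ball
  using slice_face_of_unit_ball norm_closed_in_slice fun_upd_zero_in_slice
    zero_in_unit_ball_not_in_slice slice_maximal_face
  by blast

lemma max_convex_subset_slice:
  "max_convex_subset (unit_sphere_Z Z) {z \<in> unit_sphere_Z Z. z g0 = x0}"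
proof -
  have "convex {z \<in> unit_sphere_Z Z. z g0 = x0}"
    using face_of_imp_convex[OF slice_face_of_unit_ball] by (simp only: slice_sphere_eq_slice_ball)
  then show ?thesis unfolding max_convex_subset_def using slice_maximal_convex by blast
qed

end

end

theorem lemma2p7:
  fixes X :: "'g \<Rightarrow> 'b::banach set"
    and Z :: "('g \<Rightarrow> 'b) set"
    and g0 :: 'g and x0 :: 'b
  assumes subsp: "\<And>g. subspace (X g)"
    and cl: "\<And>g. closed (X g)"
    and nonzero: "\<And>g. X g \<noteq> {0}"
    and sc: "\<And>g. strictly_convex_sub (X g)"
    and Zdef: "Z = Z0 X \<or> Z = Zinf X"
    and x0: "x0 \<in> X g0" "norm x0 = 1"
  shows "max_closed_proper_face Z (unit_ball_Z Z) {z \<in> unit_sphere_Z Z. z g0 = x0}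
       \<and> max_convex_subset (unit_sphere_Z Z) {z \<in> unit_sphere_Z Z. z g0 = x0}"
proof -
  have "sup_sum_subspace X Z"
    using Zdef
  proof
    assume "Z = Z0 X"
    then show ?thesis
      using subspace_Z0[OF subsp] Z0_subset_Zinf fun_upd_in_Z0 by unfold_locales auto
  next
    assume "Z = Zinf X"
    then show ?thesis
      using subspace_Zinf[OF subsp] fun_upd_in_Zinf by unfold_locales auto
  qed
  then interpret sup_sum_subspace X Z .
  show ?thesis
    using max_closed_proper_face_slice[OF subsp sc x0] max_convex_subset_slice[OF subsp sc x0]
    by blast
qed

end
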